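(* For a threshold graph $G$ with $n$ vertices, the matching number (maximum number of edges in a matching) satisfies $$\nu(G)=\left\lfloor\frac{n-h(\mathrm{seq}(G))}{2}\right\rfloor.$$
   Context: A threshold graph on $n\ge1$ vertices is built from a base vertex $v_0$ by successively adding $v_1,\dots,v_{n-1}$, each either isolated (adjacent to no earlier vertex) or dominating (adjacent to all earlier vertices); its creation sequence $\mathrm{seq}(G)=s_1\cdots s_{n-1}$ has $s_i=1$ if $v_i$ is dominating and $s_i=0$ otherwise. For a binary string $s=s_1\cdots s_m$ and $0\le k\le m$, the $k$-th tail is $s_{m-k+1}\cdots s_m$ (empty for $k=0$); $z_k(s)$, $u_k(s)$ are the numbers of zeros and ones in it, and $h(s)=\max_{0\le k\le m}\{z_k(s)-u_k(s)\}$. *)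

theory Defs
  imports Main
begin

(* A creation sequence s = s_1 ... s_m is a bool list (True = 1 = dominating,
   False = 0 = isolated); s_i is  s ! (i - 1).  The threshold graph built from it
   has vertex set {0..<m+1} (vertex i is v_i), and v_i, v_j with i < j are adjacent
   iff v_j was added as a dominating vertex, i.e. s_j = 1. *)

definition thr_vertices :: "bool list \<Rightarrow> nat set" where
  "thr_vertices s = {0..<length s + 1}"

definition thr_adj :: "bool list \<Rightarrow> nat \<Rightarrow> nat \<Rightarrow> bool" where
  "thr_adj s i j \<longleftrightarrow> i \<in> thr_vertices s \<and> j \<in> thr_vertices s \<and> i \<noteq> j
      \<and> s ! (max i j - 1)"

definition thr_edges :: "bool list \<Rightarrow> nat set set" where
  "thr_edges s = {{i, j} | i j. thr_adj s i j}"

definition is_matching :: "'a set set \<Rightarrow> 'a set set \<Rightarrow> bool" where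
  "is_matching E M \<longleftrightarrow> M \<subseteq> E \<and> (\<forall>e\<in>M. \<forall>e'\<in>M. e \<noteq> e' \<longrightarrow> e \<inter> e' = {})"

definition matching_number :: "'a set set \<Rightarrow> nat" where
  "matching_number E = Max {card M | M. is_matching E M}"

definition tail :: "nat \<Rightarrow> bool list \<Rightarrow> bool list" where
  "tail k s = drop (length s - k) s"

definition zeros :: "bool list \<Rightarrow> nat" where
  "zeros s = length (filter (\<lambda>b. \<not> b) s)"

definition ones :: "bool list \<Rightarrow> nat" where
  "ones s = length (filter (\<lambda>b. b) s)"

definition h :: "bool list \<Rightarrow> int" where
  "h s = Max {int (zeros (tail k s)) - int (ones (tail k s)) | k. k \<le> length s}"

end

theory Submission
  imports Defs
begin

text \<open>Appending a 0 adds an isolated vertex, so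
  \<open>\<nu>\<close> is unchanged while \<open>h\<close> grows by one. Appending a 1 adds a vertex adjacent to all
  previous ones; a maximum matching then grows by one edge exactly when it left some old vertex
  uncovered, i.e. \<open>\<nu>\<close> becomes \<open>min (\<nu> + 1) \<lfloor>(n + 1)/2\<rfloor>\<close>, while \<open>h\<close> becomes
  \<open>max 0 (h - 1)\<close>. Both recursions preserve \<open>\<nu> = \<lfloor>(n - h)/2\<rfloor>\<close>.\<close>

lemma matching_subset: "is_matching E M \<Longrightarrow> E \<subseteq> E' \<Longrightarrow> is_matching E' M"
  by (auto simp: is_matching_def)

lemma card_le_matching_number:
  assumes "finite E" "is_matching E M"
  shows "card M \<le> matching_number E"
proof -
  have "finite {card M | M. is_matching E M}"
    by (rule finite_subset[of _ "{..card E}"])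
       (use assms(1) in \<open>auto simp: is_matching_def intro: card_mono\<close>)
  then show ?thesis
    unfolding matching_number_def using assms(2) by (auto intro: Max_ge)
qed

lemma ex_maximum_matching:
  assumes "finite E"
  obtains M where "is_matching E M" "card M = matching_number E"
proof -
  let ?S = "{card M | M. is_matching E M}"
  have "finite ?S"
    by (rule finite_subset[of _ "{..card E}"])
       (use assms in \<open>auto simp: is_matching_def intro: card_mono\<close>)
  moreover have "?S \<noteq> {}"
    using is_matching_def by fastforce
  ultimately have "matching_number E \<in> ?S"
    unfolding matching_number_def by (rule Max_in)
  then show ?thesis using that by auto
qed

lemma matching_number_mono:
  assumes "finite E'" "E \<subseteq> E'"
  shows "matching_number E \<le> matching_number E'"
proof -
  obtain M where "is_matching E M" "card M = matching_number E"
    using ex_maximum_matching finite_subset[OF assms(2,1)] by blast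
  then show ?thesis
    using card_le_matching_number[OF assms(1)] matching_subset assms(2) by metis
qed

locale finite_graph =
  fixes V :: "'a set" and E :: "'a set set"
  assumes finite_vertices: "finite V"
    and edge_card: "e \<in> E \<Longrightarrow> card e = 2"
    and edge_subset: "e \<in> E \<Longrightarrow> e \<subseteq> V"
begin

lemma finite_edges: "finite E"
  using edge_subset finite_vertices by (meson PowI finite_Pow_iff finite_subset subsetI)

lemma card_Union_matching:
  assumes "is_matching E M"
  shows "card (\<Union>M) = 2 * card M"
proof -
  have M: "M \<subseteq> E" "pairwise disjnt M"
    using assms by (auto simp: is_matching_def pairwise_def disjnt_def)
  then have "card (\<Union>M) = sum card M"
    using edge_subset finite_vertices by (intro card_Union_disjoint) (auto intro: finite_subset)
  also have "\<dots> = 2 * card M"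
    using M(1) edge_card by (simp add: subset_iff)
  finally show ?thesis .
qed

lemma Union_matching_subset: "is_matching E M \<Longrightarrow> \<Union>M \<subseteq> V"
  using edge_subset by (auto simp: is_matching_def)

lemma double_matching_number_le: "2 * matching_number E \<le> card V"
proof -
  obtain M where "is_matching E M" "card M = matching_number E"
    using ex_maximum_matching finite_edges by blast
  then show ?thesis
    using card_Union_matching card_mono[OF finite_vertices Union_matching_subset] by metis
qed

end

locale dominating_extension = finite_graph +
  fixes w :: 'a
  assumes new_vertex: "w \<notin> V"
begin

definition E' :: "'a set set" where
  "E' = E \<union> {{v, w} | v. v \<in> V}"

sublocale extended: finite_graph "insert w V" E'
proof
  fix e assume "e \<in> E'"
  then show "card e = 2" "e \<subseteq> insert w V"
    using edge_card edge_subset new_vertex by (auto simp: E'_def card_insert_if)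
qed (use finite_vertices in simp)

lemma matching_number_le_extended: "matching_number E \<le> matching_number E'"
  by (rule matching_number_mono[OF extended.finite_edges]) (auto simp: E'_def)

lemma matching_number_extended_le_Suc: "matching_number E' \<le> matching_number E + 1"
proof -
  obtain M where M: "is_matching E' M" "card M = matching_number E'"
    using ex_maximum_matching extended.finite_edges by blast
  have "finite M"
    using M(1) extended.finite_edges finite_subset by (auto simp: is_matching_def)
  let ?A = "{e \<in> M. w \<in> e}" and ?B = "{e \<in> M. w \<notin> e}"
  have "card ?A \<le> Suc 0"
    using \<open>finite M\<close> M(1) by (subst card_le_Suc0_iff_eq) (auto simp: is_matching_def)
  moreover have "is_matching E ?B"
    using M(1) by (auto simp: is_matching_def E'_def)
  then have "card ?B \<le> matching_number E"
    by (rule card_le_matching_number[OF finite_edges])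
  moreover have "card M = card ?A + card ?B"
    using \<open>finite M\<close> by (subst card_Un_disjoint[symmetric]) (auto intro: arg_cong[where f = card])
  ultimately show ?thesis using M(2) by linarith
qed

lemma matching_number_extended_ge_Suc:
  assumes "2 * matching_number E < card V"
  shows "matching_number E + 1 \<le> matching_number E'"
proof -
  obtain M where M: "is_matching E M" "card M = matching_number E"
    using ex_maximum_matching finite_edges by blast
  have "\<Union>M \<noteq> V"
    using card_Union_matching[OF M(1)] M(2) assms by auto
  then obtain v where v: "v \<in> V" "v \<notin> \<Union>M"
    using Union_matching_subset[OF M(1)] by blast
  have w: "w \<notin> \<Union>M"
    using Union_matching_subset[OF M(1)] new_vertex by blast
  have "is_matching E' (insert {v, w} M)"
    using M(1) v w by (auto simp: is_matching_def E'_def)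
  then have "card (insert {v, w} M) \<le> matching_number E'"
    by (rule card_le_matching_number[OF extended.finite_edges])
  moreover have "{v, w} \<notin> M" "finite M"
    using w M(1) finite_edges finite_subset by (auto simp: is_matching_def)
  ultimately show ?thesis using M(2) by simp
qed

theorem matching_number_extended:
  "matching_number E' = min (matching_number E + 1) ((card V + 1) div 2)"
proof -
  have "2 * matching_number E' \<le> card V + 1"
    using extended.double_matching_number_le finite_vertices new_vertex by simp
  then show ?thesis
    using double_matching_number_le matching_number_le_extended
      matching_number_extended_le_Suc matching_number_extended_ge_Suc
    by (cases "2 * matching_number E < card V") auto
qed

end

lemma thr_graph: "finite_graph (thr_vertices s) (thr_edges s)"
  by unfold_locales (auto simp: thr_edges_def thr_adj_def thr_vertices_def)

lemma thr_adj_snoc: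
  "thr_adj (t @ [b]) i j \<longleftrightarrow> thr_adj t i j \<or>
     b \<and> (i = length t + 1 \<and> j \<in> thr_vertices t \<or> j = length t + 1 \<and> i \<in> thr_vertices t)"
  by (auto simp: thr_adj_def thr_vertices_def nth_append max_def)

lemma thr_edges_snoc_False: "thr_edges (t @ [False]) = thr_edges t"
  by (simp add: thr_edges_def thr_adj_snoc)

lemma thr_edges_snoc_True:
  "thr_edges (t @ [True]) = thr_edges t \<union> {{v, length t + 1} | v. v \<in> thr_vertices t}"
  unfolding thr_edges_def thr_adj_snoc by (auto simp: insert_commute)

lemma matching_number_thr_Nil: "matching_number (thr_edges []) = 0"
proof -
  have "thr_edges [] = {}"
    by (auto simp: thr_edges_def thr_adj_def thr_vertices_def)
  then show ?thesis
    using finite_graph.double_matching_number_le[OF thr_graph, of "[]"]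
    by (simp add: thr_vertices_def)
qed

lemma matching_number_thr_snoc_True:
  "matching_number (thr_edges (t @ [True]))
     = min (matching_number (thr_edges t) + 1) ((length t + 2) div 2)"
proof -
  interpret dominating_extension "thr_vertices t" "thr_edges t" "length t + 1"
    by (intro_locales, rule thr_graph) (unfold_locales, simp add: thr_vertices_def)
  have "thr_edges (t @ [True]) = E'"
    unfolding E'_def by (rule thr_edges_snoc_True)
  then show ?thesis
    using matching_number_extended by (simp add: thr_vertices_def)
qed

definition excess :: "bool list \<Rightarrow> int" where
  "excess l = int (zeros l) - int (ones l)"

lemma excess_Nil [simp]: "excess [] = 0"
  by (simp add: excess_def zeros_def ones_def)

lemma excess_snoc: "excess (l @ [b]) = excess l + (if b then -1 else 1)"
  by (simp add: excess_def zeros_def ones_def)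

lemma h_eq_Max: "h s = Max ((\<lambda>k. excess (tail k s)) ` {..length s})"
  unfolding h_def excess_def by (rule arg_cong[where f = Max]) auto

lemma h_nonneg: "h s \<ge> 0"
proof -
  have "excess (tail 0 s) \<le> h s"
    unfolding h_eq_Max by (rule Max_ge) auto
  then show ?thesis by (simp add: tail_def)
qed

lemma h_Nil: "h [] = 0"
  by (simp add: h_eq_Max tail_def)

lemma h_snoc: "h (t @ [b]) = max 0 (h t + (if b then -1 else 1))"
proof -
  let ?f = "\<lambda>k. excess (tail k t)" and ?\<delta> = "if b then -1 else 1 :: int"
  have "(\<lambda>k. excess (tail k (t @ [b]))) ` {..length (t @ [b])}
      = insert 0 ((\<lambda>x. x + ?\<delta>) ` (?f ` {..length t}))"
    by (simp add: atMost_Suc_eq_insert_0 image_image tail_def excess_snoc)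
  moreover have "Max ((\<lambda>x. x + ?\<delta>) ` (?f ` {..length t})) = Max (?f ` {..length t}) + ?\<delta>"
    by (rule mono_Max_commute[symmetric]) (auto simp: mono_def)
  ultimately show ?thesis
    by (simp add: h_eq_Max)
qed

theorem mainTheorem6:
  fixes s :: "bool list" and n :: nat
  assumes "n = length s + 1"
  shows "int (matching_number (thr_edges s)) = (int n - h s) div 2"
  unfolding assms
proof (induction s rule: rev_induct)
  case Nil
  then show ?case by (simp add: matching_number_thr_Nil h_Nil)
next
  case (snoc b t)
  have "h t \<ge> 0" by (rule h_nonneg)
  show ?case
  proof (cases b)
    case False
    then show ?thesis
      using snoc \<open>h t \<ge> 0\<close> by (simp add: thr_edges_snoc_False h_snoc)
  next
    case True
    then show ?thesis
      using snoc \<open>h t \<ge> 0\<close> by (simp add: matching_number_thr_snoc_True h_snoc)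
  qed
qed

end
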